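(* Let $n\in\mathbb{N}$ and $a,b\in\mathbb{C}$ with $b\notin\mathbb{Z}^-$. (i) If $a\neq b+1$, then \[ \sum_{j=0}^{n}\sum_{i=0}^{j}\frac{\binom{n+a+1}{i}}{\binom{n+b}{j}}(-1)^{i-j}=\frac{1}{a-b-1}\left(\frac{(a)_{n+1}}{(b+1)_n}-n-b-1\right); \] in particular for $a=b$ the sum equals $n+1$. (ii) If $a=b+1$, then \[ \sum_{j=0}^{n}\sum_{i=0}^{j}\frac{\binom{n+b+2}{i}}{\binom{n+b}{j}}(-1)^{i-j}=(n+b+1)\big(\psi(n+b+2)-\psi(b+1)\big)=(n+b+1)\sum_{k=1}^{n+1}\frac{1}{b+k}. \]
   Context: For $x\in\mathbb{C}$, $i\in\mathbb{N}$: $\binom{x}{i}=x(x-1)\cdots(x-i+1)/i!$. $\mathbb{Z}^-=\{-1,-2,\dots\}$. Pochhammer symbol: $(\alpha)_0=1$, $(\alpha)_k=\alpha(\alpha+1)\cdots(\alpha+k-1)$. $\psi=\Gamma'/\Gamma$ is the digamma function. *)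

theory Defs
  imports "HOL-Analysis.Analysis"
begin

end

theory Submission imports Defs begin

text \<open>The inner alternating sum collapses by the lower-index summation formula, leaving
  \<open>\<Sum>\<^sub>j (x gchoose j) / (y gchoose j)\<close> with \<open>x = n + a\<close>, \<open>y = n + b\<close>. Consecutive ratios
  \<open>t\<^sub>j\<close> of this sum satisfy \<open>(y - j) t\<^sub>j\<^sub>+\<^sub>1 = (x - j) t\<^sub>j\<close>, so \<open>(x - y - 1) t\<^sub>j\<close> telescopes,
  which gives (i). For \<open>a = b + 1\<close> the telescoping factor vanishes; instead the absorption
  identity turns each term into \<open>(y + 1) / (y + 1 - j)\<close>, a harmonic-type sum that the
  recurrence of the digamma function sums to \<open>\<psi>(n + b + 2) - \<psi>(b + 1)\<close>.\<close>

lemma gbinomial_alternating_partial_sum: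
  fixes a :: "'a::field_char_0"
  shows "(\<Sum>i=0..j. (a gchoose i) * (-1) ^ (j - i)) = (a - 1) gchoose j"
proof -
  have "(-1) ^ (j - i) = (-1) ^ j * ((-1) ^ i :: 'a)" if "i \<le> j" for i
  proof -
    have "(-1) ^ (j - i) = ((-1) ^ (j - i + 2 * i) :: 'a)"
      by (simp add: power_add power_mult)
    then show ?thesis
      using that by (simp add: power_add)
  qed
  then have "(\<Sum>i=0..j. (a gchoose i) * (-1) ^ (j - i))
      = (-1) ^ j * (\<Sum>i\<le>j. (a gchoose i) * (-1) ^ i)"
    by (simp add: atLeast0AtMost sum_distrib_left mult_ac)
  also have "\<dots> = (a - 1) gchoose j"
    by (simp add: gbinomial_sum_lower_neg flip: power_add mult.assoc)
  finally show ?thesis .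
qed

lemma alternating_double_sum_eq:
  fixes a c :: "'a::field_char_0"
  shows "(\<Sum>j=0..n. \<Sum>i=0..j. (a gchoose i) / (c gchoose j) * (-1) ^ (j - i))
       = (\<Sum>j=0..n. ((a - 1) gchoose j) / (c gchoose j))"
proof (rule sum.cong)
  fix j
  have "(\<Sum>i=0..j. (a gchoose i) / (c gchoose j) * (-1) ^ (j - i))
      = (\<Sum>i=0..j. (a gchoose i) * (-1) ^ (j - i)) / (c gchoose j)"
    by (simp add: sum_divide_distrib)
  then show "(\<Sum>i=0..j. (a gchoose i) / (c gchoose j) * (-1) ^ (j - i))
      = ((a - 1) gchoose j) / (c gchoose j)"
    by (simp add: gbinomial_alternating_partial_sum)
qed simp

lemma gbinomial_nonzero:
  fixes a :: "'a::field_char_0"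
  assumes "\<forall>i<k. a \<noteq> of_nat i"
  shows "a gchoose k \<noteq> 0"
proof -
  have "fact k * (a gchoose k) \<noteq> 0"
    using assms by (simp add: gbinomial_mult_fact)
  then show ?thesis by simp
qed

lemma gbinomial_Suc_mult:
  fixes a :: "'a::field_char_0"
  shows "of_nat (Suc k) * (a gchoose Suc k) = (a - of_nat k) * (a gchoose k)"
  using gbinomial_mult_1[of a k] by (simp add: algebra_simps)

lemma sum_gbinomial_quotient_telescope:
  fixes x y :: "'a::field_char_0"
  assumes "\<forall>k<m. y \<noteq> of_nat k"
  shows "(x - y - 1) * (\<Sum>j=0..m. (x gchoose j) / (y gchoose j))
       = (x - of_nat m) * (x gchoose m) / (y gchoose m) - (y + 1)"
  using assms
proof (induction m)
  case 0
  then show ?case by (simp add: algebra_simps)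
next
  case (Suc m)
  define t where "t j = (x gchoose j) / (y gchoose j)" for j
  have "y \<noteq> of_nat m" "y gchoose m \<noteq> 0"
    using Suc.prems by (simp_all add: gbinomial_nonzero)
  have "t (Suc m) = (of_nat (Suc m) * (x gchoose Suc m)) / (of_nat (Suc m) * (y gchoose Suc m))"
    by (simp add: t_def del: of_nat_Suc)
  also have "\<dots> = ((x - of_nat m) * (x gchoose m)) / ((y - of_nat m) * (y gchoose m))"
    by (simp only: gbinomial_Suc_mult)
  finally have step: "(y - of_nat m) * t (Suc m) = (x - of_nat m) * t m"
    using \<open>y \<noteq> of_nat m\<close> \<open>y gchoose m \<noteq> 0\<close> by (simp add: t_def)
  have "(x - y - 1) * (\<Sum>j=0..Suc m. t j) = (x - of_nat m) * t m - (y + 1) + (x - y - 1) * t (Suc m)"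
    using Suc by (simp add: t_def distrib_left)
  also have "\<dots> = (y - of_nat m) * t (Suc m) - (y + 1) + (x - y - 1) * t (Suc m)"
    by (simp only: step)
  also have "\<dots> = (x - of_nat (Suc m)) * t (Suc m) - (y + 1)"
    by (simp add: algebra_simps)
  finally show ?case by (simp add: t_def)
qed

lemma sum_gbinomial_quotient_succ:
  fixes y :: "'a::field_char_0"
  assumes "\<forall>k\<le>m. y + 1 \<noteq> of_nat k"
  shows "(\<Sum>j=0..m. ((y + 1) gchoose j) / (y gchoose j)) = (y + 1) * (\<Sum>j=0..m. 1 / (y + 1 - of_nat j))"
  unfolding sum_distrib_left
proof (rule sum.cong)
  fix j assume "j \<in> {0..m}"
  then have "j \<le> m" by simp
  have "y gchoose j \<noteq> 0"
  proof (intro gbinomial_nonzero allI impI)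
    fix i assume "i < j"
    then show "y \<noteq> of_nat i"
      using assms[rule_format, of "Suc i"] \<open>j \<le> m\<close> by simp
  qed
  moreover have "y + 1 - of_nat j \<noteq> 0"
    using assms[rule_format, of j] \<open>j \<le> m\<close> by simp
  moreover have "(y + 1 - of_nat j) * ((y + 1) gchoose j) = (y + 1) * (y gchoose j)"
    using gbinomial_absorb_comp[of "y + 1" j] by simp
  ultimately show "((y + 1) gchoose j) / (y gchoose j) = (y + 1) * (1 / (y + 1 - of_nat j))"
    by (simp add: divide_simps mult.commute)
qed simp

lemma Digamma_plus_of_nat_diff:
  fixes z :: "'a::{real_normed_field,banach}"
  assumes "z \<notin> \<int>\<^sub>\<le>\<^sub>0"
  shows "Digamma (z + of_nat m) - Digamma z = (\<Sum>k<m. 1 / (z + of_nat k))"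
proof -
  have "\<forall>k<m. z \<noteq> - of_nat k"
    using assms by auto
  then show ?thesis
    using Polygamma_plus_of_nat[of m z 0] by simp
qed

lemma sum_shifted_gbinomial_quotient:
  fixes a b :: "'a::field_char_0"
  assumes b: "b + 1 \<notin> \<int>\<^sub>\<le>\<^sub>0" and ab: "a \<noteq> b + 1"
  shows "(\<Sum>j=0..n. ((of_nat n + a) gchoose j) / ((of_nat n + b) gchoose j))
       = (pochhammer a (n + 1) / pochhammer (b + 1) n - of_nat n - b - 1) / (a - b - 1)"
proof -
  have "\<forall>k<n. of_nat n + b \<noteq> of_nat k"
  proof (intro allI impI notI)
    fix k assume "k < n" "of_nat n + b = of_nat k"
    then have "b = of_nat k - of_nat n"
      by (simp add: algebra_simps)
    with \<open>k < n\<close> have "b + 1 + of_nat (n - Suc k) = 0"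
      by (simp add: of_nat_diff)
    with b show False
      by (auto dest: plus_of_nat_eq_0_imp)
  qed
  from sum_gbinomial_quotient_telescope[OF this, of "of_nat n + a"]
  have "(a - b - 1) * (\<Sum>j=0..n. ((of_nat n + a) gchoose j) / ((of_nat n + b) gchoose j))
      = a * ((of_nat n + a) gchoose n) / ((of_nat n + b) gchoose n) - (of_nat n + b + 1)"
    by (simp add: algebra_simps)
  also have "a * ((of_nat n + a) gchoose n) / ((of_nat n + b) gchoose n)
      = pochhammer a (n + 1) / pochhammer (b + 1) n"
    by (simp add: gbinomial_pochhammer' pochhammer_rec)
  finally show ?thesis
    using ab by (simp add: field_simps)
qed

lemma sum_shifted_gbinomial_quotient_succ:
  fixes b :: "'a::field_char_0"
  assumes b: "b + 1 \<notin> \<int>\<^sub>\<le>\<^sub>0"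
  shows "(\<Sum>j=0..n. ((of_nat n + b + 1) gchoose j) / ((of_nat n + b) gchoose j))
       = (of_nat n + b + 1) * (\<Sum>k=1..n+1. 1 / (b + of_nat k))"
proof -
  have "\<forall>k\<le>n. of_nat n + b + 1 \<noteq> of_nat k"
  proof (intro allI impI notI)
    fix k assume "k \<le> n" "of_nat n + b + 1 = of_nat k"
    then have "b + 1 = of_nat k - of_nat n"
      by (simp add: algebra_simps)
    with \<open>k \<le> n\<close> have "b + 1 + of_nat (n - k) = 0"
      by (simp add: of_nat_diff)
    with b show False
      by (auto dest: plus_of_nat_eq_0_imp)
  qed
  from sum_gbinomial_quotient_succ[OF this]
  have "(\<Sum>j=0..n. ((of_nat n + b + 1) gchoose j) / ((of_nat n + b) gchoose j))
      = (of_nat n + b + 1) * (\<Sum>j=0..n. 1 / (b + of_nat (n + 1 - j)))"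
    by (simp add: of_nat_diff algebra_simps)
  also have "(\<Sum>j=0..n. 1 / (b + of_nat (n + 1 - j))) = (\<Sum>k=1..n+1. 1 / (b + of_nat k))"
    by (rule sum.reindex_bij_witness[of _ "\<lambda>k. n + 1 - k" "\<lambda>j. n + 1 - j"]) auto
  finally show ?thesis .
qed

theorem mainTheorem11:
  fixes n :: nat and a b :: complex
  assumes hb: "\<forall>k::nat. k \<ge> 1 \<longrightarrow> b \<noteq> - of_nat k"
  shows "(a \<noteq> b + 1 \<longrightarrow>
           (\<Sum>j=0..n. \<Sum>i=0..j. ((of_nat n + a + 1) gchoose i) / ((of_nat n + b) gchoose j)
                * (-1) ^ (j - i))
           = (1 / (a - b - 1)) * (pochhammer a (n + 1) / pochhammer (b + 1) n - of_nat n - b - 1))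
       \<and> (\<Sum>j=0..n. \<Sum>i=0..j. ((of_nat n + b + 1) gchoose i) / ((of_nat n + b) gchoose j)
                * (-1) ^ (j - i)) = of_nat n + 1
       \<and> (\<Sum>j=0..n. \<Sum>i=0..j. ((of_nat n + b + 2) gchoose i) / ((of_nat n + b) gchoose j)
                * (-1) ^ (j - i))
           = (of_nat n + b + 1) * (Digamma (of_nat n + b + 2) - Digamma (b + 1))
       \<and> (of_nat n + b + 1) * (Digamma (of_nat n + b + 2) - Digamma (b + 1))
           = (of_nat n + b + 1) * (\<Sum>k=1..n+1. 1 / (b + of_nat k))"
proof -
  have b: "b + 1 \<notin> \<int>\<^sub>\<le>\<^sub>0"
    using hb by (auto elim!: nonpos_Ints_cases' simp: algebra_simps eq_neg_iff_add_eq_0)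
  note double_sum = alternating_double_sum_eq[where c = "of_nat n + b"]
  have pochhammer_quotient: "pochhammer b (n + 1) / pochhammer (b + 1) n = b"
    using b by (auto simp: pochhammer_rec pochhammer_eq_0_iff)
  have shift: "of_nat n + b + 2 - 1 = of_nat n + b + 1"
    by simp
  have "a \<noteq> b + 1 \<longrightarrow>
      (\<Sum>j=0..n. \<Sum>i=0..j. ((of_nat n + a + 1) gchoose i) / ((of_nat n + b) gchoose j) * (-1) ^ (j - i))
      = (1 / (a - b - 1)) * (pochhammer a (n + 1) / pochhammer (b + 1) n - of_nat n - b - 1)"
    unfolding double_sum using sum_shifted_gbinomial_quotient[OF b, of a n] by simp
  moreover have "(\<Sum>j=0..n. \<Sum>i=0..j. ((of_nat n + b + 1) gchoose i) / ((of_nat n + b) gchoose j)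
      * (-1) ^ (j - i)) = of_nat n + 1"
    unfolding double_sum using sum_shifted_gbinomial_quotient[OF b, of b n] pochhammer_quotient
    by simp
  moreover have "(\<Sum>j=0..n. \<Sum>i=0..j. ((of_nat n + b + 2) gchoose i) / ((of_nat n + b) gchoose j)
      * (-1) ^ (j - i)) = (of_nat n + b + 1) * (\<Sum>k=1..n+1. 1 / (b + of_nat k))"
    unfolding double_sum shift by (rule sum_shifted_gbinomial_quotient_succ[OF b])
  moreover have "Digamma (of_nat n + b + 2) - Digamma (b + 1) = (\<Sum>k=1..n+1. 1 / (b + of_nat k))"
    using Digamma_plus_of_nat_diff[OF b, of "n + 1"]
    by (simp add: sum.atLeast1_atMost_eq algebra_simps)
  ultimately show ?thesis
    by simp
qed

end
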